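(* For every $n\ge1$ and $k\ge0$, the number of words $w\in\mathcal{P}_{n-1}^2(321)$ with $\mathrm{des}(w)=k$ equals the number of $321$-avoiding permutations of $[n]$ with exactly $k$ peaks.
   Context: $\mathfrak{S}_n$ is the set of permutations of $[n]=\{1,\dots,n\}$; $\mathrm{FIX}(\pi)=\{i:\pi(i)=i\}$. A $2$-arrangement of $[n]$ is a pair $(\pi,\phi)$ with $\pi\in\mathfrak{S}_n$ and $\phi:\mathrm{FIX}(\pi)\to\{-1,-2\}$ arbitrary. Its permutation form is obtained from $\pi(1)\cdots\pi(n)$ by replacing $\pi(i)$ with $-1$ for each $i\in\mathrm{FIX}(\pi)$ with $\phi(i)=-1$, then replacing every occurrence of the $j$-th smallest positive letter by $j$ for all $j$. $\mathcal{P}_n^2$ is the set of these permutation forms ($\mathcal{P}_0^2$ consists of the empty word). For an integer word $w=w_1\cdots w_n$, $\mathrm{des}(w)=|\{i\in[n-1]:w_i>w_{i+1}\}|$; $\mathrm{red}(w)$ replaces every occurrence of the $j$-th smallest letter by $j$; $w$ avoids $\sigma\in\mathfrak{S}_3$ if there are no $i_1<i_2<i_3$ with $\mathrm{red}(w_{i_1}w_{i_2}w_{i_3})=\sigma$; $\mathcal{P}_n^2(\sigma)$ is the set of words of $\mathcal{P}_n^2$ avoiding $\sigma$. A peak of a permutation $\pi\in\mathfrak{S}_n$ is an index $i$ with $1<i<n$ and $\pi_{i-1}<\pi_i>\pi_{i+1}$. *)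

theory Defs
  imports "HOL-Combinatorics.Permutations"
begin

definition FIX :: "(nat \<Rightarrow> nat) \<Rightarrow> nat \<Rightarrow> nat set" where
  "FIX \<pi> n = {i \<in> {1..n}. \<pi> i = i}"

definition std_pos :: "int list \<Rightarrow> int list" where
  "std_pos w = map (\<lambda>x. if 0 < x then int (card {y \<in> set w. 0 < y \<and> y \<le> x}) else x) w"

text \<open>Permutation form of the 2-arrangement (pi, phi) of [n].\<close>
definition perm_form :: "nat \<Rightarrow> (nat \<Rightarrow> nat) \<Rightarrow> (nat \<Rightarrow> int) \<Rightarrow> int list" where
  "perm_form n \<pi> \<phi> =
     std_pos (map (\<lambda>i. if i \<in> FIX \<pi> n \<and> \<phi> i = -1 then -1 else int (\<pi> i)) [1..<n+1])"

definition P2 :: "nat \<Rightarrow> int list set" where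
  "P2 n = {perm_form n \<pi> \<phi> | \<pi> \<phi>. \<pi> permutes {1..n} \<and> (\<forall>i \<in> FIX \<pi> n. \<phi> i \<in> {-1, -2})}"

definition des :: "'a::linorder list \<Rightarrow> nat" where
  "des w = card {i. i + 1 < length w \<and> w ! i > w ! (i + 1)}"

definition red :: "'a::linorder list \<Rightarrow> nat list" where
  "red w = map (\<lambda>x. card {y \<in> set w. y \<le> x}) w"

definition avoids :: "'a::linorder list \<Rightarrow> nat list \<Rightarrow> bool" where
  "avoids w \<sigma> \<longleftrightarrow> \<not> (\<exists>i1 i2 i3. i1 < i2 \<and> i2 < i3 \<and> i3 < length w \<and>
                        red [w ! i1, w ! i2, w ! i3] = \<sigma>)"

definition word_of :: "nat \<Rightarrow> (nat \<Rightarrow> nat) \<Rightarrow> nat list" where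
  "word_of n \<pi> = map \<pi> [1..<n+1]"

definition peaks :: "nat \<Rightarrow> (nat \<Rightarrow> nat) \<Rightarrow> nat set" where
  "peaks n \<pi> = {i. 1 < i \<and> i < n \<and> \<pi> (i - 1) < \<pi> i \<and> \<pi> i > \<pi> (i + 1)}"

end

(*
  A word of P^2_m is a word of length m over {-1, 1, 2, ...} whose positive letters form a
  permutation of 1, ..., p: a fixed point labelled -2 keeps its positive letter, so only -1
  survives as a negative letter, and every such word arises.

  Let a t be a 321-avoiding permutation of [n]. The letters of t below a occur in increasing
  order, since two of them in decreasing order would form a 321 with a. Replacing them by -1
  and lowering the other letters by a therefore yields a 321-avoiding word of P^2_(n-1) with
  the same descents as t. This is a bijection: a is one more than the number of -1's, which
  are refilled by 1, ..., a - 1 from left to right.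

  Finally, in a 321-avoiding permutation every descent at a position i >= 2 is preceded by an
  ascent, so the peaks of pi are exactly the descents of pi(2) ... pi(n), shifted by one.
*)
theory Submission
  imports Defs "HOL-Combinatorics.Multiset_Permutations"
begin

lemma card_Collect_bij_betw:
  assumes "bij_betw f A B"
  shows "card {x \<in> A. P (f x)} = card {y \<in> B. P y}"
proof -
  have "f ` {x \<in> A. P (f x)} = {y \<in> B. P y}"
    using bij_betw_imp_surj_on[OF assms] by auto
  moreover have "inj_on f {x \<in> A. P (f x)}"
    using bij_betw_imp_inj_on[OF assms] by (rule inj_on_subset) auto
  ultimately show ?thesis
    by (metis card_image)
qed

definition has_321 :: "'a::linorder list \<Rightarrow> bool" where
  "has_321 w \<longleftrightarrow> (\<exists>i j k. i < j \<and> j < k \<and> k < length w \<and> w ! i > w ! j \<and> w ! j > w ! k)"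

lemma red_eq_321_iff: "red [x, y, z :: 'a::linorder] = [3, 2, 1] \<longleftrightarrow> x > y \<and> y > z"
proof
  assume red: "red [x, y, z] = [3, 2, 1]"
  have card_le: "card {u \<in> {x, y, z}. u \<le> x} = 3" "card {u \<in> {x, y, z}. u \<le> y} = 2"
    "card {u \<in> {x, y, z}. u \<le> z} = 1"
    using red by (auto simp: red_def)
  have mono: "card {u \<in> {x, y, z}. u \<le> a} \<le> card {u \<in> {x, y, z}. u \<le> b}" if "a \<le> b" for a b
    by (rule card_mono) (use that in auto)
  show "x > y \<and> y > z"
    using mono[of x y] mono[of y z] card_le by force
next
  assume "x > y \<and> y > z"
  then have "{u \<in> {x, y, z}. u \<le> x} = {x, y, z}" "{u \<in> {x, y, z}. u \<le> y} = {y, z}"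
    "{u \<in> {x, y, z}. u \<le> z} = {z}" "x \<noteq> y" "x \<noteq> z" "y \<noteq> z"
    by auto
  then show "red [x, y, z] = [3, 2, 1]" by (simp add: red_def)
qed

lemma avoids_321_iff: "avoids w [3, 2, 1] \<longleftrightarrow> \<not> has_321 w"
  unfolding avoids_def has_321_def red_eq_321_iff by blast

section \<open>Ranks in a finite linear order\<close>

definition rank :: "'a::linorder set \<Rightarrow> 'a \<Rightarrow> nat" where
  "rank S x = card {y \<in> S. y \<le> x}"

lemma rank_less:
  assumes "finite S" "y \<in> S" "x < y"
  shows "rank S x < rank S y"
  unfolding rank_def
proof (rule psubset_card_mono)
  have "y \<notin> {z \<in> S. z \<le> x}" using assms(3) by auto
  then show "{z \<in> S. z \<le> x} \<subset> {z \<in> S. z \<le> y}" using assms by auto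
qed (use assms(1) in simp)

lemma rank_in_range:
  assumes "finite S" "x \<in> S"
  shows "rank S x \<in> {1..card S}"
proof -
  have "0 < card {y \<in> S. y \<le> x}"
    using assms by (subst card_gt_0_iff) auto
  moreover have "card {y \<in> S. y \<le> x} \<le> card S"
    using assms by (intro card_mono) auto
  ultimately show ?thesis by (simp add: rank_def)
qed

lemma strict_mono_on_rank: "finite S \<Longrightarrow> strict_mono_on S (rank S)"
  by (intro strict_mono_onI rank_less)

lemma bij_betw_rank:
  assumes "finite S"
  shows "bij_betw (rank S) S {1..card S}"
proof -
  have inj: "inj_on (rank S) S"
    by (rule strict_mono_on_imp_inj_on[OF strict_mono_on_rank[OF assms]])
  have "rank S ` S \<subseteq> {1..card S}"
    using rank_in_range[OF assms] by auto
  moreover have "card (rank S ` S) = card {1..card S}"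
    using card_image[OF inj] by simp
  ultimately have "rank S ` S = {1..card S}"
    by (simp add: card_subset_eq)
  with inj show ?thesis by (simp add: bij_betw_def)
qed

lemma rank_image:
  assumes "strict_mono_on S f" "x \<in> S"
  shows "rank (f ` S) (f x) = rank S x"
proof -
  have "{y \<in> f ` S. y \<le> f x} = f ` {y \<in> S. y \<le> x}"
    using strict_mono_on_less_eq[OF assms(1) _ assms(2)] by auto
  moreover have "inj_on f {y \<in> S. y \<le> x}"
    using strict_mono_on_imp_inj_on[OF assms(1)] by (rule inj_on_subset) auto
  ultimately show ?thesis by (simp add: rank_def card_image)
qed

lemma rank_atLeastAtMost_nat: "x \<in> {1..p} \<Longrightarrow> rank {1..p::nat} x = x"
proof -
  assume "x \<in> {1..p}"
  then have "{y \<in> {1..p}. y \<le> x} = {1..x}" by auto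
  then show ?thesis by (simp add: rank_def)
qed

lemma rank_atLeastAtMost_int: "x \<in> {1..p} \<Longrightarrow> rank {1..p::int} x = nat x"
proof -
  assume "x \<in> {1..p}"
  then have "{y \<in> {1..p}. y \<le> x} = {1..x}" by auto
  then show ?thesis by (simp add: rank_def)
qed

lemma rank_unique:
  assumes "finite S" "bij_betw g S {1..card S}" "strict_mono_on S g" "x \<in> S"
  shows "g x = rank S x"
proof -
  have "rank S x = rank (g ` S) (g x)"
    using rank_image[OF assms(3,4)] by simp
  also have "\<dots> = rank {1..card S} (g x)"
    using bij_betw_imp_surj_on[OF assms(2)] by simp
  also have "\<dots> = g x"
    by (rule rank_atLeastAtMost_nat) (use bij_betwE[OF assms(2)] assms(4) in blast)
  finally show ?thesis by simp
qed

lemma strict_mono_on_inv_into: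
  fixes f :: "'a::linorder \<Rightarrow> 'b::linorder"
  assumes "strict_mono_on A f"
  shows "strict_mono_on (f ` A) (inv_into A f)"
proof (rule strict_mono_onI)
  fix u v assume "u \<in> f ` A" "v \<in> f ` A" "u < v"
  then obtain a b where "a \<in> A" "b \<in> A" "u = f a" "v = f b" "f a < f b" by blast
  moreover have "inj_on f A" by (rule strict_mono_on_imp_inj_on[OF assms])
  ultimately show "inv_into A f u < inv_into A f v"
    using strict_mono_on_less[OF assms] by simp
qed

section \<open>Permutation forms as standardized words\<close>

definition positive_positions :: "int list \<Rightarrow> nat set" where
  "positive_positions w = {i. i < length w \<and> 0 < w ! i}"

definition standardized :: "int list \<Rightarrow> bool" where
  "standardized w \<longleftrightarrow> (\<forall>x\<in>set w. x = -1 \<or> 0 < x) \<and>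
     bij_betw (\<lambda>i. nat (w ! i)) (positive_positions w) {1..card (positive_positions w)}"

lemma std_pos_eq_rank:
  "std_pos u = map (\<lambda>x. if 0 < x then int (rank {y \<in> set u. 0 < y} x) else x) u"
  by (simp add: std_pos_def rank_def conj_assoc)

lemma standardized_std_pos:
  assumes vals: "\<forall>x\<in>set u. x = -1 \<or> 0 < x" and inj: "inj_on (nth u) (positive_positions u)"
  shows "standardized (std_pos u)"
proof -
  define S where "S = {y \<in> set u. 0 < y}"
  define P where "P = positive_positions u"
  have finS: "finite S" by (simp add: S_def)
  have nth_std: "std_pos u ! i = (if 0 < u ! i then int (rank S (u ! i)) else u ! i)"
    if "i < length u" for i
    using that by (simp add: std_pos_eq_rank S_def)
  have rank_pos: "0 < rank S x" if "x \<in> S" for x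
    using rank_in_range[OF finS that] by simp
  have pos_iff: "0 < std_pos u ! i \<longleftrightarrow> 0 < u ! i" if "i < length u" for i
    using nth_std[OF that] rank_pos[of "u ! i"] that by (auto simp: S_def)
  have "length (std_pos u) = length u"
    by (simp add: std_pos_def)
  with pos_iff have P_std: "positive_positions (std_pos u) = P"
    by (auto simp: positive_positions_def P_def)
  have "bij_betw (nth u) P S"
    using inj by (auto simp: bij_betw_def P_def S_def positive_positions_def in_set_conv_nth)
  then have "bij_betw (rank S \<circ> nth u) P {1..card P}"
    using bij_betw_trans[OF _ bij_betw_rank[OF finS]] bij_betw_same_card by metis
  then have "bij_betw (\<lambda>i. nat (std_pos u ! i)) P {1..card P}"
    by (rule bij_betw_cong[THEN iffD1, rotated])
       (auto simp: nth_std P_def positive_positions_def)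
  moreover have "\<forall>x\<in>set (std_pos u). x = -1 \<or> 0 < x"
    using vals rank_pos by (auto simp: std_pos_eq_rank S_def)
  ultimately show ?thesis by (simp add: standardized_def P_std)
qed

lemma standardized_positive_values:
  assumes "standardized w"
  shows "{x \<in> set w. 0 < x} = {1..int (card (positive_positions w))}"
proof -
  define P where "P = positive_positions w"
  have "{x \<in> set w. 0 < x} = int ` (\<lambda>i. nat (w ! i)) ` P"
    by (force simp: P_def positive_positions_def in_set_conv_nth image_image)
  also have "(\<lambda>i. nat (w ! i)) ` P = {1..card P}"
    using assms by (simp add: standardized_def bij_betw_def P_def)
  finally show ?thesis by (simp add: image_int_atLeastAtMost P_def)
qed

lemma std_pos_id:
  assumes "{x \<in> set w. 0 < x} = {1..p}"
  shows "std_pos w = w"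
  unfolding std_pos_eq_rank assms
proof (rule map_idI)
  fix x assume x: "x \<in> set w"
  show "(if 0 < x then int (rank {1..p} x) else x) = x"
  proof (cases "0 < x")
    case True
    with x assms have "x \<in> {1..p}" by blast
    with True show ?thesis by (simp add: rank_atLeastAtMost_int)
  qed simp
qed

lemma std_pos_relabel:
  assumes std: "standardized w"
    and mono: "strict_mono_on {1..card (positive_positions w)} e"
    and pos: "\<forall>k\<in>{1..card (positive_positions w)}. 0 < e k"
  shows "std_pos (map (\<lambda>x. if 0 < x then int (e (nat x)) else x) w) = w"
proof -
  define f where "f x = (if 0 < x then int (e (nat x)) else x)" for x
  define V where "V = {x \<in> set w. 0 < x}"
  have V: "V = {1..int (card (positive_positions w))}"
    using standardized_positive_values[OF std] by (simp add: V_def)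
  have nat_V: "nat x \<in> {1..card (positive_positions w)}" if "x \<in> V" for x
    using that by (simp add: V nat_le_iff le_nat_iff)
  have f_mono: "strict_mono_on V f"
  proof (rule strict_mono_onI)
    fix x y assume "x \<in> V" "y \<in> V" "x < y"
    then have "e (nat x) < e (nat y)"
      using nat_V by (intro strict_mono_onD[OF mono]) (auto simp: V_def)
    with \<open>x \<in> V\<close> \<open>y \<in> V\<close> show "f x < f y"
      by (simp add: f_def V_def)
  qed
  have vals: "\<forall>x\<in>set w. x = -1 \<or> 0 < x"
    using std by (simp add: standardized_def)
  have f_pos: "0 < f x \<longleftrightarrow> x \<in> V" if "x \<in> set w" for x
    using that vals pos nat_V by (auto simp: f_def V_def)
  then have fV: "{y \<in> set (map f w). 0 < y} = f ` V"
    by (auto simp: V_def)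
  have fixed: "(if 0 < f x then int (rank (f ` V) (f x)) else f x) = x" if "x \<in> set w" for x
  proof (cases "x \<in> V")
    case True
    then show ?thesis
      using f_pos[OF that] rank_image[OF f_mono True] by (simp add: V rank_atLeastAtMost_int)
  next
    case False
    with that show ?thesis
      by (simp add: f_def V_def)
  qed
  have "std_pos (map f w) = w"
    unfolding std_pos_eq_rank fV map_map comp_def by (rule map_idI) (rule fixed)
  then show ?thesis
    by (simp add: f_def[abs_def])
qed

lemma length_perm_form: "length (perm_form m \<pi> \<phi>) = m"
  by (simp add: perm_form_def std_pos_def)

lemma standardized_perm_form:
  assumes perm: "\<pi> permutes {1..m}"
  shows "standardized (perm_form m \<pi> \<phi>)"
proof -
  define u where "u = map (\<lambda>i. if i \<in> FIX \<pi> m \<and> \<phi> i = -1 then -1 else int (\<pi> i)) [1..<m+1]"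
  have u_nth: "u ! j = (if Suc j \<in> FIX \<pi> m \<and> \<phi> (Suc j) = -1 then -1 else int (\<pi> (Suc j)))"
    if "j < m" for j
    using that by (simp add: u_def nth_map_upt del: upt_Suc)
  have "0 < \<pi> i" if "i \<in> {1..m}" for i
    using permutes_in_image[OF perm, of i] that by simp
  then have vals: "\<forall>x\<in>set u. x = -1 \<or> 0 < x"
    by (auto simp: u_def)
  have "inj_on (nth u) (positive_positions u)"
  proof (rule inj_onI)
    fix i j assume pos: "i \<in> positive_positions u" "j \<in> positive_positions u"
      and eq: "u ! i = u ! j"
    have "length u = m" by (simp add: u_def)
    with pos have "i < m" "j < m" "0 < u ! i" "0 < u ! j"
      by (auto simp: positive_positions_def)
    with eq have "\<pi> (Suc i) = \<pi> (Suc j)"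
      by (simp add: u_nth split: if_splits)
    then show "i = j"
      using permutes_inj[OF perm] by (auto dest: injD)
  qed
  with vals show ?thesis
    unfolding perm_form_def u_def[symmetric] by (rule standardized_std_pos)
qed

lemma perm_form_supported:
  assumes "\<pi> permutes G" "G \<subseteq> {1..m}"
  shows "perm_form m \<pi> (\<lambda>i. if i \<in> G then -2 else -1) =
           std_pos (map (\<lambda>i. if i \<in> G then int (\<pi> i) else -1) [1..<m+1])"
  unfolding perm_form_def using permutes_not_in[OF assms(1)] assms(2)
  by (intro arg_cong[where f = std_pos] map_cong) (auto simp: FIX_def)

lemma ex_strict_mono_enumeration:
  fixes G :: "'a::linorder set"
  assumes "finite G"
  shows "\<exists>e. bij_betw e {1..card G} G \<and> strict_mono_on {1..card G} e"
proof (intro exI conjI)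
  show "bij_betw (inv_into G (rank G)) {1..card G} G"
    by (rule bij_betw_inv_into[OF bij_betw_rank[OF assms]])
  show "strict_mono_on {1..card G} (inv_into G (rank G))"
    using strict_mono_on_inv_into[OF strict_mono_on_rank[OF assms]]
      bij_betw_imp_surj_on[OF bij_betw_rank[OF assms]]
    by simp
qed

text \<open>If \<open>e\<close> enumerates the positions \<open>G\<close> of the positive letters of \<open>w\<close> (counted from 1)
  increasingly, then \<open>reordering w e\<close> moves the position of a letter \<open>k\<close> to the \<open>k\<close>-th element
  of \<open>G\<close>; it is the permutation whose permutation form is \<open>w\<close>.\<close>

definition reordering :: "int list \<Rightarrow> (nat \<Rightarrow> nat) \<Rightarrow> nat \<Rightarrow> nat" where
  "reordering w e i = (if i \<in> Suc ` positive_positions w then e (nat (w ! (i - 1))) else i)"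

lemma reordering_permutes:
  assumes std: "standardized w"
    and e: "bij_betw e {1..card (Suc ` positive_positions w)} (Suc ` positive_positions w)"
  shows "reordering w e permutes (Suc ` positive_positions w)"
proof (rule bij_imp_permutes)
  have "bij_betw (\<lambda>i. i - 1) (Suc ` positive_positions w) (positive_positions w)"
    by (rule bij_betw_imageI) (auto simp: inj_on_def image_image)
  then have letters: "bij_betw (\<lambda>i. nat (w ! (i - 1)))
      (Suc ` positive_positions w) {1..card (Suc ` positive_positions w)}"
    using bij_betw_trans std by (fastforce simp: standardized_def comp_def card_image)
  show "bij_betw (reordering w e) (Suc ` positive_positions w) (Suc ` positive_positions w)"
    by (rule bij_betw_cong[THEN iffD1, OF _ bij_betw_trans[OF letters e]])
      (simp add: reordering_def)
qed (simp add: reordering_def)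

lemma perm_form_reordering:
  assumes len: "length w = m" and std: "standardized w"
    and e_bij: "bij_betw e {1..card (Suc ` positive_positions w)} (Suc ` positive_positions w)"
    and e_mono: "strict_mono_on {1..card (Suc ` positive_positions w)} e"
  shows "perm_form m (reordering w e) (\<lambda>i. if i \<in> Suc ` positive_positions w then -2 else -1) = w"
proof -
  define G where "G = Suc ` positive_positions w"
  have G_sub: "G \<subseteq> {1..m}"
    using len by (auto simp: G_def positive_positions_def)
  have "map (\<lambda>i. if i \<in> G then int (reordering w e i) else -1) [1..<m+1] =
      map (\<lambda>x. if 0 < x then int (e (nat x)) else x) w"
  proof (rule nth_equalityI)
    fix j assume "j < length (map (\<lambda>i. if i \<in> G then int (reordering w e i) else -1) [1..<m+1])"
    then have j: "j < m" by (simp del: upt_Suc)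
    have "Suc j \<in> G \<longleftrightarrow> 0 < w ! j"
      using j len by (auto simp: G_def positive_positions_def)
    moreover have "w ! j = -1 \<or> 0 < w ! j"
      using std j len by (simp add: standardized_def)
    ultimately show "map (\<lambda>i. if i \<in> G then int (reordering w e i) else -1) [1..<m+1] ! j =
        map (\<lambda>x. if 0 < x then int (e (nat x)) else x) w ! j"
      using j len by (auto simp: nth_map_upt reordering_def G_def simp del: upt_Suc)
  qed (simp add: len)
  also have "std_pos \<dots> = w"
    using std e_mono bij_betwE[OF e_bij] G_sub
    by (intro std_pos_relabel) (auto simp: G_def card_image)
  finally show ?thesis
    unfolding G_def[symmetric]
    using perm_form_supported[OF reordering_permutes[OF std e_bij, folded G_def] G_sub] by simp
qed

lemma standardized_in_P2:
  assumes len: "length w = m" and std: "standardized w"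
  shows "w \<in> P2 m"
proof -
  define G where "G = Suc ` positive_positions w"
  have "G \<subseteq> {1..m}"
    using len by (auto simp: G_def positive_positions_def)
  then have "finite G"
    using finite_subset by blast
  then obtain e where e: "bij_betw e {1..card G} G" "strict_mono_on {1..card G} e"
    using ex_strict_mono_enumeration by blast
  have "reordering w e permutes {1..m}"
    using reordering_permutes[OF std e(1)[unfolded G_def]] \<open>G \<subseteq> {1..m}\<close>
    by (auto simp: G_def intro: permutes_subset)
  moreover have "\<forall>i\<in>FIX (reordering w e) m. (\<lambda>i. if i \<in> G then -2 else -1 :: int) i \<in> {-1, -2}"
    by simp
  moreover have "w = perm_form m (reordering w e) (\<lambda>i. if i \<in> G then -2 else -1)"
    using perm_form_reordering[OF len std e[unfolded G_def]] by (simp add: G_def)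
  ultimately show ?thesis
    unfolding P2_def by blast
qed

lemma P2_eq: "P2 m = {w. length w = m \<and> standardized w}"
proof (intro equalityI subsetI)
  fix w assume "w \<in> P2 m"
  then obtain \<pi> \<phi> where "w = perm_form m \<pi> \<phi>" "\<pi> permutes {1..m}"
    unfolding P2_def by blast
  then show "w \<in> {w. length w = m \<and> standardized w}"
    by (simp add: length_perm_form standardized_perm_form)
qed (simp add: standardized_in_P2)

section \<open>Deleting the first letter of a 321-avoiding permutation\<close>

definition squash :: "nat \<Rightarrow> nat \<Rightarrow> int" where
  "squash a x = (if x < a then -1 else int x - int a)"

definition collapse :: "nat list \<Rightarrow> int list" where
  "collapse xs = map (squash (hd xs)) (tl xs)"

lemma collapse_Cons: "collapse (a # t) = map (squash a) t"
  by (simp add: collapse_def)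

lemma length_collapse: "length (collapse xs) = length xs - 1"
  by (simp add: collapse_def)

definition low_positions :: "nat \<Rightarrow> nat list \<Rightarrow> nat set" where
  "low_positions a t = {j. j < length t \<and> t ! j < a}"

lemma squash_less_squash_imp_less: "squash a x < squash a y \<Longrightarrow> x < y"
  by (auto simp: squash_def split: if_splits)

lemma squash_less_iff:
  assumes "x \<noteq> a" "y \<noteq> a" "\<not> (x < a \<and> y < a)"
  shows "squash a x < squash a y \<longleftrightarrow> x < y"
  using assms by (auto simp: squash_def)

lemma squash_eq_minus_one_iff: "squash a x = -1 \<longleftrightarrow> x < a"
  by (simp add: squash_def)

lemma strict_mono_on_low_positions:
  assumes "distinct (a # t)" "\<not> has_321 (a # t)"
  shows "strict_mono_on (low_positions a t) (nth t)"
proof (rule strict_mono_onI)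
  fix i j assume "i \<in> low_positions a t" "j \<in> low_positions a t" "i < j"
  then have ij: "i < j" "j < length t" "t ! i < a" "t ! j < a"
    by (auto simp: low_positions_def)
  have "t ! i \<noteq> t ! j"
    using assms(1) ij by (simp add: nth_eq_iff_index_eq)
  moreover have "\<not> t ! i > t ! j"
  proof
    assume "t ! i > t ! j"
    with ij have "has_321 (a # t)"
      unfolding has_321_def by (intro exI[of _ 0] exI[of _ "Suc i"] exI[of _ "Suc j"]) auto
    with assms(2) show False ..
  qed
  ultimately show "t ! i < t ! j" by simp
qed

lemma des_map_squash:
  assumes low: "strict_mono_on (low_positions a t) (nth t)" and a: "a \<notin> set t"
  shows "des (map (squash a) t) = des t"
proof -
  have step: "squash a (t ! (i + 1)) < squash a (t ! i) \<longleftrightarrow> t ! (i + 1) < t ! i"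
    if "i + 1 < length t" for i
  proof (cases "t ! i < a \<and> t ! (i + 1) < a")
    case True
    then have "t ! i < t ! (i + 1)"
      using that strict_mono_onD[OF low, of i "i + 1"] by (simp add: low_positions_def)
    with True show ?thesis by (simp add: squash_def)
  next
    case False
    moreover have "t ! i \<noteq> a" "t ! (i + 1) \<noteq> a"
      using a that nth_mem[of i t] nth_mem[of "i + 1" t] by auto
    ultimately show ?thesis
      using squash_less_iff[of "t ! (i + 1)" a "t ! i"] by auto
  qed
  then have "{i. i + 1 < length (map (squash a) t) \<and>
        map (squash a) t ! (i + 1) < map (squash a) t ! i} =
      {i. i + 1 < length t \<and> t ! (i + 1) < t ! i}"
    by (intro Collect_cong) auto
  then show ?thesis
    by (simp only: des_def)
qed

lemma has_321_Cons_iff: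
  assumes low: "strict_mono_on (low_positions a t) (nth t)" and a: "a \<notin> set t"
  shows "has_321 (a # t) \<longleftrightarrow> has_321 (map (squash a) t)"
proof
  assume "has_321 (map (squash a) t)"
  then obtain i j k where "i < j" "j < k" "k < length t" "t ! i > t ! j" "t ! j > t ! k"
    unfolding has_321_def using squash_less_squash_imp_less by fastforce
  then show "has_321 (a # t)"
    unfolding has_321_def by (intro exI[of _ "Suc i"] exI[of _ "Suc j"] exI[of _ "Suc k"]) simp
next
  assume "has_321 (a # t)"
  then obtain i j k where ijk: "i < j" "j < k" "k < Suc (length t)"
    "(a # t) ! i > (a # t) ! j" "(a # t) ! j > (a # t) ! k"
    unfolding has_321_def by auto
  then obtain j' k' where jk: "j = Suc j'" "k = Suc k'"
    by (metis less_imp_Suc_add)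
  have not_a: "t ! j' \<noteq> a" "t ! k' \<noteq> a"
    using a jk ijk nth_mem[of j' t] nth_mem[of k' t] by auto
  have not_low: "\<not> (t ! j' < a \<and> t ! k' < a)"
    using strict_mono_onD[OF low, of j' k'] jk ijk by (auto simp: low_positions_def)
  show "has_321 (map (squash a) t)"
  proof (cases i)
    case 0
    then show ?thesis using ijk jk not_low by simp
  next
    case (Suc i')
    then have t: "t ! i' > t ! j'" "t ! j' > t ! k'"
      using ijk jk by auto
    with not_low not_a have "t ! j' > a" by auto
    with t not_a have "squash a (t ! i') > squash a (t ! j')" "squash a (t ! j') > squash a (t ! k')"
      by (simp_all add: squash_less_iff)
    with ijk Suc jk show ?thesis
      unfolding has_321_def by (intro exI[of _ i'] exI[of _ j'] exI[of _ k']) simp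
  qed
qed

lemma positive_values_map_squash:
  assumes set_t: "set t = {1..n} - {a}"
  shows "{x \<in> set (map (squash a) t). 0 < x} = {1..int n - int a}"
proof (intro equalityI subsetI)
  fix y assume "y \<in> {x \<in> set (map (squash a) t). 0 < x}"
  then obtain x where "x \<in> set t" "y = squash a x" "0 < y"
    by auto
  moreover from \<open>x \<in> set t\<close> set_t have "x \<le> n"
    by auto
  ultimately show "y \<in> {1..int n - int a}"
    by (simp add: squash_def split: if_splits)
next
  fix y assume y: "y \<in> {1..int n - int a}"
  then have "nat y + a \<in> {1..n} - {a}"
    by auto
  with set_t have "nat y + a \<in> set t"
    by simp
  moreover have "squash a (nat y + a) = y"
    using y by (simp add: squash_def)
  ultimately have "y \<in> set (map (squash a) t)"
    by (metis image_eqI set_map)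
  with y show "y \<in> {x \<in> set (map (squash a) t). 0 < x}"
    by simp
qed

lemma standardized_collapse:
  assumes "xs \<in> permutations_of_set {1..n}"
  shows "standardized (collapse xs)"
proof (cases xs)
  case Nil
  then show ?thesis by (simp add: collapse_def standardized_def positive_positions_def bij_betw_def)
next
  case (Cons a t)
  have set_t: "set t = {1..n} - {a}" and dist: "distinct (a # t)"
    using assms Cons by (auto simp: permutations_of_set_def)
  define w where "w = map (squash a) t"
  have vals: "\<forall>x\<in>set w. x = -1 \<or> 0 < x"
    using dist by (auto simp: w_def squash_def)
  have "inj_on (nth w) (positive_positions w)"
  proof (rule inj_onI)
    fix i j assume "i \<in> positive_positions w" "j \<in> positive_positions w" "w ! i = w ! j"
    then have "i < length t" "j < length t" "t ! i = t ! j"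
      by (auto simp: positive_positions_def w_def squash_def split: if_splits)
    with dist show "i = j"
      by (simp add: nth_eq_iff_index_eq)
  qed
  with vals have "standardized (std_pos w)"
    by (rule standardized_std_pos)
  moreover have "std_pos w = w"
    unfolding w_def by (rule std_pos_id[OF positive_values_map_squash[OF set_t]])
  ultimately show ?thesis
    by (simp add: collapse_Cons Cons w_def)
qed

definition minus_positions :: "int list \<Rightarrow> nat set" where
  "minus_positions w = {j. j < length w \<and> w ! j = -1}"

definition expand :: "int list \<Rightarrow> nat list" where
  "expand w = (card (minus_positions w) + 1) #
     map (\<lambda>j. if j \<in> minus_positions w then rank (minus_positions w) j
               else nat (w ! j) + card (minus_positions w) + 1) [0..<length w]"

lemma expand_in_permutations:
  assumes std: "standardized w"
  shows "expand w \<in> permutations_of_set {1..length w + 1}"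
proof -
  define M where "M = minus_positions w"
  define P where "P = positive_positions w"
  define a where "a = card M + 1"
  define t where "t = map (\<lambda>j. if j \<in> M then rank M j else nat (w ! j) + a) [0..<length w]"
  have expand: "expand w = a # t"
    by (simp add: expand_def t_def a_def M_def add.assoc)
  have finM: "finite M"
    by (simp add: M_def minus_positions_def)
  have "M \<union> P = {..<length w}" "M \<inter> P = {}"
    using std by (auto simp: standardized_def M_def P_def minus_positions_def positive_positions_def)
  then have partition: "{..<length w} = M \<union> P" and card_MP: "card M + card P = length w"
    using card_Un_disjoint[of M P] finM by (auto simp: P_def positive_positions_def)
  have "set t = (\<lambda>j. if j \<in> M then rank M j else nat (w ! j) + a) ` (M \<union> P)"
    by (simp add: t_def partition atLeast0LessThan)
  also have "\<dots> = rank M ` M \<union> (\<lambda>x. x + a) ` (\<lambda>j. nat (w ! j)) ` P"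
    using \<open>M \<inter> P = {}\<close> by (auto simp: image_Un image_image intro!: image_cong)
  also have "\<dots> = {1..card M} \<union> {a + 1..card P + a}"
    using bij_betw_imp_surj_on[OF bij_betw_rank[OF finM]] std
    by (simp add: standardized_def P_def bij_betw_def)
  finally have "set (a # t) = insert a \<dots>"
    by simp
  also have "\<dots> = {1..card M + card P + 1}"
    unfolding a_def by auto
  finally have set_eq: "set (a # t) = {1..length w + 1}"
    by (simp add: card_MP)
  moreover have "distinct (a # t)"
    by (rule card_distinct) (simp only: set_eq, simp add: t_def)
  ultimately show ?thesis
    unfolding expand permutations_of_set_def by blast
qed

lemma nth_tl_expand:
  "j < length w \<Longrightarrow> tl (expand w) ! j =
     (if j \<in> minus_positions w then rank (minus_positions w) j
      else nat (w ! j) + card (minus_positions w) + 1)"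
  by (simp add: expand_def)

lemma low_positions_expand:
  "low_positions (hd (expand w)) (tl (expand w)) = minus_positions w"
proof -
  define M where "M = minus_positions w"
  have M_sub: "M \<subseteq> {..<length w}" and finM: "finite M"
    by (auto simp: M_def minus_positions_def)
  have "tl (expand w) ! j < card M + 1 \<longleftrightarrow> j \<in> M" if "j < length w" for j
    using nth_tl_expand[OF that] rank_in_range[OF finM, of j] by (auto simp: M_def[symmetric])
  moreover have "hd (expand w) = card M + 1" "length (tl (expand w)) = length w"
    by (simp_all add: expand_def M_def)
  ultimately show ?thesis
    using M_sub by (auto simp: low_positions_def M_def[symmetric])
qed

lemma strict_mono_on_expand:
  "strict_mono_on (low_positions (hd (expand w)) (tl (expand w))) (nth (tl (expand w)))"
  unfolding low_positions_expand
proof (rule strict_mono_onI)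
  fix i j assume "i \<in> minus_positions w" "j \<in> minus_positions w" "i < j"
  moreover have "finite (minus_positions w)"
    by (simp add: minus_positions_def)
  ultimately show "tl (expand w) ! i < tl (expand w) ! j"
    using rank_less[of "minus_positions w" j i] by (auto simp: expand_def minus_positions_def)
qed

lemma collapse_expand:
  assumes std: "standardized w"
  shows "collapse (expand w) = w"
proof (rule nth_equalityI)
  fix j assume "j < length (collapse (expand w))"
  then have j: "j < length w"
    by (simp add: collapse_def expand_def)
  define M where "M = minus_positions w"
  have "rank M j \<le> card M" if "j \<in> M"
    using rank_in_range[of M j] that by (simp add: M_def minus_positions_def)
  moreover have "0 < w ! j" if "j \<notin> M"
    using std j that nth_mem[OF j] by (auto simp: standardized_def M_def minus_positions_def)
  ultimately show "collapse (expand w) ! j = w ! j"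
    using j by (auto simp: collapse_def expand_def squash_def M_def[symmetric])
      (auto simp: M_def minus_positions_def)
qed (simp add: collapse_def expand_def)

lemma bij_betw_low_positions:
  assumes "a # t \<in> permutations_of_set {1..n}"
  shows "bij_betw (nth t) (low_positions a t) {1..<a}"
proof (rule bij_betw_imageI)
  have set_t: "set t = {1..n} - {a}" and "a \<le> n" and "distinct t"
    using assms by (auto simp: permutations_of_set_def)
  show "inj_on (nth t) (low_positions a t)"
    using \<open>distinct t\<close> by (rule inj_on_nth) (simp add: low_positions_def)
  have "nth t ` low_positions a t = {x \<in> set t. x < a}"
    by (auto simp: low_positions_def in_set_conv_nth)
  also have "\<dots> = {1..<a}"
    unfolding set_t using \<open>a \<le> n\<close> by auto
  finally show "nth t ` low_positions a t = {1..<a}" .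
qed

lemma card_low_positions:
  assumes "a # t \<in> permutations_of_set {1..n}"
  shows "card (low_positions a t) + 1 = a"
proof -
  have "a \<in> {1..n}"
    by (metis assms list.set_intros(1) permutations_of_setD(1))
  then show ?thesis
    using bij_betw_same_card[OF bij_betw_low_positions[OF assms]] by simp
qed

lemma rank_low_positions:
  assumes perm: "a # t \<in> permutations_of_set {1..n}" and no_321: "\<not> has_321 (a # t)"
    and j: "j \<in> low_positions a t"
  shows "rank (low_positions a t) j = t ! j"
proof (rule rank_unique[symmetric, OF _ _ _ j])
  show "finite (low_positions a t)"
    by (simp add: low_positions_def)
  show "strict_mono_on (low_positions a t) (nth t)"
    using perm no_321 by (intro strict_mono_on_low_positions) (simp_all add: permutations_of_set_def)
  have "{1..<a} = {1..card (low_positions a t)}"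
    using card_low_positions[OF perm] by auto
  then show "bij_betw (nth t) (low_positions a t) {1..card (low_positions a t)}"
    using bij_betw_low_positions[OF perm] by simp
qed

lemma minus_positions_map_squash: "minus_positions (map (squash a) t) = low_positions a t"
  by (auto simp: minus_positions_def low_positions_def squash_eq_minus_one_iff)

lemma expand_collapse:
  assumes perm: "xs \<in> permutations_of_set {1..n}" and "1 \<le> n" and no_321: "\<not> has_321 xs"
  shows "expand (collapse xs) = xs"
proof -
  obtain a t where xs: "xs = a # t"
    using perm \<open>1 \<le> n\<close> by (cases xs) (auto simp: permutations_of_set_def)
  define w where "w = map (squash a) t"
  define L where "L = low_positions a t"
  have card_L: "Suc (card L) = a"
    using card_low_positions perm by (simp add: xs L_def)
  have pointwise: "(if j \<in> L then rank L j else nat (w ! j) + card L + 1) = t ! j"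
    if j: "j < length t" for j
  proof (cases "j \<in> L")
    case True
    then show ?thesis
      using rank_low_positions perm no_321 by (simp add: xs L_def)
  next
    case False
    moreover have "t ! j \<noteq> a"
      using perm j nth_mem by (fastforce simp: xs permutations_of_set_def)
    ultimately show ?thesis
      using j card_L by (auto simp: L_def low_positions_def w_def squash_def)
  qed
  have "map (\<lambda>j. if j \<in> L then rank L j else nat (w ! j) + card L + 1) [0..<length w] =
      map (nth t) [0..<length t]"
  proof (rule map_cong)
    show "[0..<length w] = [0..<length t]"
      by (simp add: w_def)
  qed (intro pointwise, simp)
  moreover have "expand w =
      (card L + 1) # map (\<lambda>j. if j \<in> L then rank L j else nat (w ! j) + card L + 1) [0..<length w]"
    unfolding expand_def w_def minus_positions_map_squash L_def ..
  ultimately show ?thesis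
    by (simp add: xs collapse_Cons w_def[symmetric] card_L map_nth)
qed

lemma not_has_321_collapse:
  assumes "distinct xs" "\<not> has_321 xs"
  shows "\<not> has_321 (collapse xs)"
proof (cases xs)
  case (Cons a t)
  with assms show ?thesis
    using has_321_Cons_iff[OF strict_mono_on_low_positions] by (simp add: collapse_Cons)
qed (simp add: collapse_def has_321_def)

lemma des_collapse:
  assumes "distinct xs" "\<not> has_321 xs"
  shows "des (collapse xs) = des (tl xs)"
proof (cases xs)
  case (Cons a t)
  with assms show ?thesis
    using des_map_squash[OF strict_mono_on_low_positions] by (simp add: collapse_Cons)
qed (simp add: collapse_def des_def)

lemma bij_betw_collapse:
  assumes "1 \<le> n"
  shows "bij_betw collapse {xs \<in> permutations_of_set {1..n}. \<not> has_321 xs}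
           {w. length w = n - 1 \<and> standardized w \<and> \<not> has_321 w}"
proof (rule bij_betw_byWitness[where f' = expand])
  show "\<forall>xs\<in>{xs \<in> permutations_of_set {1..n}. \<not> has_321 xs}. expand (collapse xs) = xs"
    using expand_collapse assms by blast
  show "\<forall>w\<in>{w. length w = n - 1 \<and> standardized w \<and> \<not> has_321 w}. collapse (expand w) = w"
    using collapse_expand by blast
  show "collapse ` {xs \<in> permutations_of_set {1..n}. \<not> has_321 xs} \<subseteq>
      {w. length w = n - 1 \<and> standardized w \<and> \<not> has_321 w}"
  proof (rule image_subsetI)
    fix xs assume xs: "xs \<in> {xs \<in> permutations_of_set {1..n}. \<not> has_321 xs}"
    then have "distinct xs" "length xs = n"
      by (auto simp: permutations_of_set_def distinct_card[symmetric])
    with xs show "collapse xs \<in> {w. length w = n - 1 \<and> standardized w \<and> \<not> has_321 w}"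
      using standardized_collapse[of xs n] not_has_321_collapse[of xs] by (simp add: length_collapse)
  qed
  show "expand ` {w. length w = n - 1 \<and> standardized w \<and> \<not> has_321 w} \<subseteq>
      {xs \<in> permutations_of_set {1..n}. \<not> has_321 xs}"
  proof (rule image_subsetI)
    fix w assume w: "w \<in> {w. length w = n - 1 \<and> standardized w \<and> \<not> has_321 w}"
    then have perm: "expand w \<in> permutations_of_set {1..n}"
      using expand_in_permutations assms by fastforce
    have "expand w = hd (expand w) # tl (expand w)"
      by (simp add: expand_def)
    moreover have "hd (expand w) \<notin> set (tl (expand w))"
      using perm by (simp add: expand_def permutations_of_set_def)
    ultimately have "has_321 (expand w) \<longleftrightarrow> has_321 (collapse (expand w))"
      using has_321_Cons_iff[OF strict_mono_on_expand] by (metis collapse_def)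
    with w perm show "expand w \<in> {xs \<in> permutations_of_set {1..n}. \<not> has_321 xs}"
      by (simp add: collapse_expand)
  qed
qed

section \<open>One-line notation and peaks\<close>

lemma nth_word_of: "j < n \<Longrightarrow> word_of n \<pi> ! j = \<pi> (Suc j)"
  by (simp add: word_of_def nth_map_upt del: upt_Suc)

lemma length_word_of: "length (word_of n \<pi>) = n"
  by (simp add: word_of_def)

lemma set_word_of: "set (word_of n \<pi>) = \<pi> ` {1..n}"
  by (auto simp: word_of_def)

lemma distinct_word_of: "\<pi> permutes {1..n} \<Longrightarrow> distinct (word_of n \<pi>)"
  by (auto simp: word_of_def distinct_map permutes_inj_on atLeastLessThanSuc_atLeastAtMost)

definition perm_of_word :: "nat \<Rightarrow> nat list \<Rightarrow> nat \<Rightarrow> nat" where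
  "perm_of_word n xs i = (if i \<in> {1..n} then xs ! (i - 1) else i)"

lemma perm_of_word_word_of:
  assumes "\<pi> permutes {1..n}"
  shows "perm_of_word n (word_of n \<pi>) = \<pi>"
proof
  fix i
  show "perm_of_word n (word_of n \<pi>) i = \<pi> i"
    using nth_word_of[of "i - 1" n \<pi>] permutes_not_in[OF assms, of i]
    by (auto simp: perm_of_word_def)
qed

lemma word_of_perm_of_word:
  assumes "length xs = n"
  shows "word_of n (perm_of_word n xs) = xs"
  using assms by (intro nth_equalityI) (simp_all add: nth_word_of length_word_of perm_of_word_def)

lemma perm_of_word_permutes:
  assumes xs: "xs \<in> permutations_of_set {1..n}"
  shows "perm_of_word n xs permutes {1..n}"
proof (rule bij_imp_permutes)
  have "length xs = n"
    using xs by (auto simp: permutations_of_set_def distinct_card[symmetric])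
  then have "perm_of_word n xs ` {1..n} = set xs"
    using set_word_of word_of_perm_of_word by metis
  also have "\<dots> = {1..n}"
    using xs by (simp add: permutations_of_set_def)
  finally show "bij_betw (perm_of_word n xs) {1..n} {1..n}"
    by (simp add: bij_betw_def finite_surj_inj)
qed (auto simp: perm_of_word_def)

lemma bij_betw_word_of:
  "bij_betw (word_of n) {\<pi>. \<pi> permutes {1..n}} (permutations_of_set {1..n})"
proof (rule bij_betw_byWitness[where f' = "perm_of_word n"])
  show "\<forall>\<pi>\<in>{\<pi>. \<pi> permutes {1..n}}. perm_of_word n (word_of n \<pi>) = \<pi>"
    by (simp add: perm_of_word_word_of)
  show "\<forall>xs\<in>permutations_of_set {1..n}. word_of n (perm_of_word n xs) = xs"
    by (auto simp: word_of_perm_of_word permutations_of_set_def distinct_card[symmetric])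
  show "word_of n ` {\<pi>. \<pi> permutes {1..n}} \<subseteq> permutations_of_set {1..n}"
    by (auto simp: permutations_of_set_def set_word_of permutes_image distinct_word_of)
  show "perm_of_word n ` permutations_of_set {1..n} \<subseteq> {\<pi>. \<pi> permutes {1..n}}"
    using perm_of_word_permutes by blast
qed

lemma ascent_before_descent:
  assumes "distinct xs" "\<not> has_321 xs" "j + 2 < length xs" "xs ! (j + 1) > xs ! (j + 2)"
  shows "xs ! j < xs ! (j + 1)"
proof -
  have "xs ! j \<noteq> xs ! (j + 1)"
    using assms(1,3) by (simp add: nth_eq_iff_index_eq)
  moreover have "\<not> xs ! j > xs ! (j + 1)"
  proof
    assume "xs ! j > xs ! (j + 1)"
    with assms(3,4) have "has_321 xs"
      unfolding has_321_def by (intro exI[of _ j] exI[of _ "j + 1"] exI[of _ "j + 2"]) simp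
    with assms(2) show False ..
  qed
  ultimately show ?thesis by simp
qed

lemma card_peaks_eq_des_tl:
  assumes "distinct (word_of n \<pi>)" "\<not> has_321 (word_of n \<pi>)"
  shows "card (peaks n \<pi>) = des (tl (word_of n \<pi>))"
proof -
  define xs where "xs = word_of n \<pi>"
  have \<pi>_xs: "\<pi> (Suc j) = xs ! j" if "j < n" for j
    using that by (simp add: xs_def nth_word_of)
  \<comment> \<open>list positions start at 0, so a peak of \<open>\<pi>\<close> at \<open>i\<close>
    is a descent of \<open>tl xs\<close> at \<open>i - 2\<close>\<close>
  have "peaks n \<pi> = (\<lambda>j. j + 2) ` {j. j + 2 < n \<and> xs ! (j + 1) > xs ! (j + 2)}"
  proof (intro equalityI subsetI)
    fix i assume "i \<in> peaks n \<pi>"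
    then have i: "1 < i" "i < n" "\<pi> i > \<pi> (i + 1)"
      by (auto simp: peaks_def)
    define j where "j = i - 2"
    have ij: "i = j + 2"
      using i(1) by (simp add: j_def)
    with i have "j \<in> {j. j + 2 < n \<and> xs ! (j + 1) > xs ! (j + 2)}"
      using \<pi>_xs[of "j + 1"] \<pi>_xs[of "j + 2"] by simp
    with ij show "i \<in> (\<lambda>j. j + 2) ` {j. j + 2 < n \<and> xs ! (j + 1) > xs ! (j + 2)}"
      by blast
  next
    fix i assume "i \<in> (\<lambda>j. j + 2) ` {j. j + 2 < n \<and> xs ! (j + 1) > xs ! (j + 2)}"
    then obtain j where j: "i = j + 2" "j + 2 < n" "xs ! (j + 1) > xs ! (j + 2)"
      by blast
    moreover have "xs ! j < xs ! (j + 1)"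
      using ascent_before_descent[of xs j] assms j by (simp add: xs_def length_word_of)
    ultimately show "i \<in> peaks n \<pi>"
      using \<pi>_xs[of j] \<pi>_xs[of "j + 1"] \<pi>_xs[of "j + 2"] by (simp add: peaks_def numeral_2_eq_2)
  qed
  then have "card (peaks n \<pi>) = card {j. j + 2 < n \<and> xs ! (j + 1) > xs ! (j + 2)}"
    by (simp add: card_image inj_on_def)
  also have "\<dots> = des (tl xs)"
    unfolding des_def
    by (intro arg_cong[where f = card] Collect_cong) (auto simp: xs_def length_word_of nth_tl)
  finally show ?thesis by (simp add: xs_def)
qed

theorem theorem4p3:
  fixes n k :: nat
  assumes "n \<ge> 1"
  shows "card {w \<in> P2 (n - 1). avoids w [3,2,1] \<and> des w = k}
       = card {\<pi>. \<pi> permutes {1..n} \<and> avoids (word_of n \<pi>) [3,2,1] \<and> card (peaks n \<pi>) = k}"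
proof -
  let ?W = "{w. length w = n - 1 \<and> standardized w \<and> \<not> has_321 w}"
  let ?L = "{xs \<in> permutations_of_set {1..n}. \<not> has_321 xs}"
  have "{w \<in> P2 (n - 1). avoids w [3,2,1] \<and> des w = k} = {w \<in> ?W. des w = k}"
    unfolding P2_eq avoids_321_iff by auto
  then have "card {w \<in> P2 (n - 1). avoids w [3,2,1] \<and> des w = k} = card {xs \<in> ?L. des (collapse xs) = k}"
    using card_Collect_bij_betw[OF bij_betw_collapse[OF assms], of "\<lambda>w. des w = k"] by simp
  also have "{xs \<in> ?L. des (collapse xs) = k} =
      {xs \<in> permutations_of_set {1..n}. \<not> has_321 xs \<and> des (tl xs) = k}"
    using des_collapse by (auto simp: permutations_of_set_def)
  also have "card \<dots> = card {\<pi> \<in> {\<pi>. \<pi> permutes {1..n}}.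
      \<not> has_321 (word_of n \<pi>) \<and> des (tl (word_of n \<pi>)) = k}"
    by (rule card_Collect_bij_betw[OF bij_betw_word_of, symmetric])
  also have "{\<pi> \<in> {\<pi>. \<pi> permutes {1..n}}. \<not> has_321 (word_of n \<pi>) \<and> des (tl (word_of n \<pi>)) = k} =
      {\<pi>. \<pi> permutes {1..n} \<and> avoids (word_of n \<pi>) [3,2,1] \<and> card (peaks n \<pi>) = k}"
    unfolding avoids_321_iff using card_peaks_eq_des_tl distinct_word_of by auto
  finally show ?thesis .
qed

end
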